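(* Let $L\le U$ be integers with $U-L+1$ a power of $2$, and let $\mathcal{T}(L,U)$ be the dyadic tree on leaves $L,\ldots,U$. Fix a leaf $i\in[L,U]$, and let $[l_1,u_1],[l_2,u_2],\ldots$ be all intervals $[l,u]$ indexing nodes of $\mathcal{T}(L,U)$ such that $i\in[l,u]$ and the node indexed by $[l,u]$ is a left node, listed in ascending order of $u_k-l_k$. Then for every $k$, $u_k-i\ge 2^{k-1}-1$.
   Context: The dyadic tree $\mathcal{T}(L,U)$ (for $U-L+1$ a power of $2$) is the complete binary tree whose leaves are indexed by the integers $L,L+1,\ldots,U$ in order, and in which, whenever two sibling nodes are indexed by intervals $[l_1,u_1]$ and $[u_1+1,u_2]$, their parent is indexed by $[l_1,u_2]$ (a leaf $m$ is identified with the interval $[m,m]$). A node whose indexing interval precedes its sibling's indexing interval is a left node; its sibling is a right node (the root has no sibling and is neither). *)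

theory Defs
  imports Main
begin

text \<open>The dyadic tree with 2^n leaves L, ..., L + 2^n - 1. Nodes are identified with
  their indexing intervals (l,u).\<close>

fun dyadic_nodes :: "nat \<Rightarrow> int \<Rightarrow> (int \<times> int) set" where
  "dyadic_nodes 0 L = {(L, L)}"
| "dyadic_nodes (Suc n) L =
     insert (L, L + 2^(Suc n) - 1) (dyadic_nodes n L \<union> dyadic_nodes n (L + 2^n))"

text \<open>Left nodes: those nodes whose interval precedes that of their sibling, i.e. the
  left child of some internal node. The root is not a left node.\<close>

fun dyadic_left_nodes :: "nat \<Rightarrow> int \<Rightarrow> (int \<times> int) set" where
  "dyadic_left_nodes 0 L = {}"
| "dyadic_left_nodes (Suc n) L =
     insert (L, L + 2^n - 1) (dyadic_left_nodes n L \<union> dyadic_left_nodes n (L + 2^n))"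

end

theory Submission
  imports Defs
begin

text \<open>In the tree on \<open>[L, L + 2^(n+1) - 1]\<close> the left nodes containing a leaf \<open>i\<close> are
  those of the half containing \<open>i\<close>, together with the left child \<open>[L, L + 2^n - 1]\<close> of the root
  when \<open>i\<close> lies in it. Induction on \<open>n\<close> then gives \<open>2^c \<le> u - i + 1\<close> for every left node
  \<open>[l, u] \<ni> i\<close>, where \<open>c\<close> counts the other left nodes containing \<open>i\<close> that are no wider:
  entering the left half adds one node while \<open>u - i\<close> grows by \<open>2^n \<ge> 2^c\<close>. In the sorted list
  the \<open>k\<close>-th node has \<open>k - 1\<close> such nodes before it.\<close>

lemma finite_dyadic_left_nodes: "finite (dyadic_left_nodes n L)"
  by (induction n arbitrary: L) auto

lemma dyadic_left_node_bounds:
  assumes "(l, u) \<in> dyadic_left_nodes n L"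
  shows "L \<le> l \<and> u \<le> L + 2^n - 1 \<and> 2 * (u - l + 1) \<le> 2^n"
  using assms
proof (induction n arbitrary: L)
  case 0
  then show ?case by simp
next
  case (Suc n)
  have "(0::int) < 2^n" by simp
  with Suc show ?case by (auto simp: power_Suc; smt (verit))
qed

lemma dyadic_left_nodes_root_notin: "(L, L + 2^n - 1) \<notin> dyadic_left_nodes n L"
  using dyadic_left_node_bounds[of L "L + 2^n - 1" n L] by auto

definition dyadic_left_nodes_containing :: "nat \<Rightarrow> int \<Rightarrow> int \<Rightarrow> (int \<times> int) set" where
  "dyadic_left_nodes_containing n L i = {(l, u) \<in> dyadic_left_nodes n L. l \<le> i \<and> i \<le> u}"

lemma finite_dyadic_left_nodes_containing: "finite (dyadic_left_nodes_containing n L i)"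
  unfolding dyadic_left_nodes_containing_def
  using finite_dyadic_left_nodes by (auto intro: finite_subset)

lemma dyadic_left_nodes_containing_Suc_left:
  assumes "L \<le> i" and "i \<le> L + 2^n - 1"
  shows "dyadic_left_nodes_containing (Suc n) L i
           = insert (L, L + 2^n - 1) (dyadic_left_nodes_containing n L i)"
proof -
  have "\<not> l \<le> i" if "(l, u) \<in> dyadic_left_nodes n (L + 2^n)" for l u
    using dyadic_left_node_bounds[OF that] assms(2) by linarith
  then show ?thesis
    using assms unfolding dyadic_left_nodes_containing_def by auto
qed

lemma dyadic_left_nodes_containing_Suc_right:
  assumes "L + 2^n \<le> i"
  shows "dyadic_left_nodes_containing (Suc n) L i = dyadic_left_nodes_containing n (L + 2^n) i"
proof -
  have "\<not> i \<le> u" if "(l, u) \<in> dyadic_left_nodes n L" for l u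
    using dyadic_left_node_bounds[OF that] assms by linarith
  then show ?thesis
    using assms unfolding dyadic_left_nodes_containing_def by auto
qed

lemma two_power_card_dyadic_left_nodes_containing:
  assumes "L \<le> i" and "i \<le> L + 2^n - 1"
  shows "2 ^ card (dyadic_left_nodes_containing n L i) \<le> L + 2^n - i"
  using assms
proof (induction n arbitrary: L)
  case 0
  then show ?case by (simp add: dyadic_left_nodes_containing_def)
next
  case (Suc n)
  show ?case
  proof (cases "i \<le> L + 2^n - 1")
    case True
    let ?c = "card (dyadic_left_nodes_containing n L i)"
    have "(L, L + 2^n - 1) \<notin> dyadic_left_nodes_containing n L i"
      using dyadic_left_nodes_root_notin unfolding dyadic_left_nodes_containing_def by auto
    then have "card (dyadic_left_nodes_containing (Suc n) L i) = Suc ?c"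
      using dyadic_left_nodes_containing_Suc_left[OF Suc.prems(1) True]
        finite_dyadic_left_nodes_containing by simp
    moreover have "(2::int) ^ ?c \<le> L + 2^n - i"
      using Suc.IH[OF Suc.prems(1) True] .
    ultimately show ?thesis
      using Suc.prems(1) by simp
  next
    case False
    then have "2 ^ card (dyadic_left_nodes_containing n (L + 2^n) i) \<le> L + 2^n + 2^n - i"
      using Suc.IH[of "L + 2^n"] Suc.prems by simp
    then show ?thesis
      using dyadic_left_nodes_containing_Suc_right[of L n i] False by simp
  qed
qed

definition narrower_dyadic_left_nodes_containing ::
    "nat \<Rightarrow> int \<Rightarrow> int \<Rightarrow> int \<times> int \<Rightarrow> (int \<times> int) set" where
  "narrower_dyadic_left_nodes_containing n L i p =
     {q \<in> dyadic_left_nodes_containing n L i. snd q - fst q \<le> snd p - fst p \<and> q \<noteq> p}"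

lemma two_power_card_narrower_dyadic_left_nodes_containing:
  assumes "p \<in> dyadic_left_nodes_containing n L i"
  shows "2 ^ card (narrower_dyadic_left_nodes_containing n L i p) \<le> snd p - i + 1"
  using assms
proof (induction n arbitrary: L)
  case 0
  then show ?case by (simp add: dyadic_left_nodes_containing_def)
next
  case (Suc n)
  obtain l u where p: "p = (l, u)" "l \<le> i" "i \<le> u" "(l, u) \<in> dyadic_left_nodes (Suc n) L"
    using Suc.prems unfolding dyadic_left_nodes_containing_def by auto
  have L_i: "L \<le> i" "i \<le> L + 2^Suc n - 1"
    using dyadic_left_node_bounds[OF p(4)] p by auto
  show ?case
  proof (cases "i \<le> L + 2^n - 1")
    case True
    note split = dyadic_left_nodes_containing_Suc_left[OF L_i(1) True]
    show ?thesis
    proof (cases "p = (L, L + 2^n - 1)")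
      case True
      have "snd q - fst q \<le> snd p - fst p \<and> q \<noteq> p"
        if "q \<in> dyadic_left_nodes_containing n L i" for q
        using that dyadic_left_node_bounds[of "fst q" "snd q" n L] dyadic_left_nodes_root_notin[of L n]
        unfolding dyadic_left_nodes_containing_def True by auto
      then have "narrower_dyadic_left_nodes_containing (Suc n) L i p
                   = dyadic_left_nodes_containing n L i"
        unfolding narrower_dyadic_left_nodes_containing_def split True by auto
      then show ?thesis
        using two_power_card_dyadic_left_nodes_containing[OF L_i(1) \<open>i \<le> L + 2^n - 1\<close>] True
        by simp
    next
      case False
      then have p_left: "p \<in> dyadic_left_nodes_containing n L i"
        using Suc.prems split by auto
      then have "\<not> L + 2^n - 1 - L \<le> snd p - fst p"
        using dyadic_left_node_bounds[of "fst p" "snd p" n L]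
        unfolding dyadic_left_nodes_containing_def by auto
      then have "narrower_dyadic_left_nodes_containing (Suc n) L i p
                   = narrower_dyadic_left_nodes_containing n L i p"
        unfolding narrower_dyadic_left_nodes_containing_def split by auto
      then show ?thesis
        using Suc.IH[OF p_left] by simp
    qed
  next
    case False
    note split = dyadic_left_nodes_containing_Suc_right[of L n i]
    then have "p \<in> dyadic_left_nodes_containing n (L + 2^n) i"
      using Suc.prems False by simp
    moreover have "narrower_dyadic_left_nodes_containing (Suc n) L i p
                     = narrower_dyadic_left_nodes_containing n (L + 2^n) i p"
      unfolding narrower_dyadic_left_nodes_containing_def using split False by simp
    ultimately show ?thesis
      using Suc.IH by simp
  qed
qed

lemma index_le_card_preceding_in_sorted:
  assumes "distinct xs" and "sorted_wrt (\<lambda>a b. f a \<le> f b) xs" and "j < length xs"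
  shows "j \<le> card {q \<in> set xs. f q \<le> f (xs ! j) \<and> q \<noteq> xs ! j}"
proof -
  have "set (take j xs) \<subseteq> {q \<in> set xs. f q \<le> f (xs ! j) \<and> q \<noteq> xs ! j}"
  proof
    fix q
    assume "q \<in> set (take j xs)"
    then obtain j' where "j' < j" "q = xs ! j'"
      using assms(3) by (auto simp: in_set_conv_nth)
    then show "q \<in> {q \<in> set xs. f q \<le> f (xs ! j) \<and> q \<noteq> xs ! j}"
      using assms by (auto simp: sorted_wrt_iff_nth_less nth_eq_iff_index_eq)
  qed
  then have "card (set (take j xs)) \<le> card {q \<in> set xs. f q \<le> f (xs ! j) \<and> q \<noteq> xs ! j}"
    by (intro card_mono) auto
  then show ?thesis
    using assms by (simp add: distinct_card)
qed

theorem lemma3: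
  fixes L U i :: int and n :: nat and xs :: "(int \<times> int) list"
  assumes "L \<le> U" and "U - L + 1 = 2 ^ n"
    and "L \<le> i" and "i \<le> U"
    and "set xs = {(l, u) \<in> dyadic_left_nodes n L. l \<le> i \<and> i \<le> u}"
    and "distinct xs"
    and "sorted_wrt (\<lambda>a b. snd a - fst a \<le> snd b - fst b) xs"
  shows "\<forall>k. 1 \<le> k \<and> k \<le> length xs \<longrightarrow> snd (xs ! (k - 1)) - i \<ge> 2 ^ (k - 1) - 1"
proof (intro allI impI)
  fix k
  assume k: "1 \<le> k \<and> k \<le> length xs"
  define p where "p = xs ! (k - 1)"
  have set_xs: "set xs = dyadic_left_nodes_containing n L i"
    using assms(5) unfolding dyadic_left_nodes_containing_def .
  then have p_in: "p \<in> dyadic_left_nodes_containing n L i"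
    using k unfolding p_def by (metis diff_less less_le_trans nth_mem zero_less_one)
  have "k - 1 \<le> card (narrower_dyadic_left_nodes_containing n L i p)"
    using index_le_card_preceding_in_sorted[OF assms(6,7), of "k - 1"] k set_xs
    unfolding p_def narrower_dyadic_left_nodes_containing_def by fastforce
  then have "(2::int) ^ (k - 1) \<le> 2 ^ card (narrower_dyadic_left_nodes_containing n L i p)"
    by (simp add: power_increasing)
  also have "\<dots> \<le> snd p - i + 1"
    using two_power_card_narrower_dyadic_left_nodes_containing[OF p_in] .
  finally show "snd (xs ! (k - 1)) - i \<ge> 2 ^ (k - 1) - 1"
    unfolding p_def by simp
qed

end
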